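(* Let $\mathcal C$ be an additive category and let $\mathcal F$, $\mathcal G$ and $\bar\cdot$ be additive endofunctors of $\mathcal C$, where $\bar\cdot$ is the identity on objects and an involution on morphisms. Let $f$ be a natural transformation from $\mathcal F$ to $\mathcal G$, and let $\partial:\mathrm{Hom}_{\mathcal C}(A,B)\to\mathrm{Hom}_{\mathcal C}(\mathcal G A,\mathcal F B)$ be an operation on Hom-sets such that: (1) $\partial$ is $\mathbb{Z}$-linear: $\partial(\phi-\psi)=\partial\phi-\partial\psi$ for $\phi,\psi\in\mathrm{Hom}(A,B)$; (2) for $\phi\in\mathrm{Hom}(A,B)$: $\mathcal G(\phi-\bar\phi)=f_B\,\partial\phi$ and $\mathcal F(\phi-\bar\phi)=\partial\phi\,f_A$; (3) for composable $\phi\in\mathrm{Hom}(A,B)$, $\psi\in\mathrm{Hom}(B,C)$: $\partial(\psi\phi)=\partial\psi\,\mathcal G\phi+\mathcal F\bar\psi\,\partial\phi=\partial\psi\,\mathcal G\bar\phi+\mathcal F\psi\,\partial\phi$. Let $C$ be a chain complex over $\mathcal C$ with differential $d$; then $f$ gives a chain map $f_C:\mathcal F C\to\mathcal G C$. Let $\bar C$ be the chain complex obtained by applying $\bar\cdot$ to the differential of $C$ (same objects). Then the mapping cones $\mathrm{Cone}(f_C)$ and $\mathrm{Cone}(f_{\bar C})$ are isomorphic chain complexes.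
   Context: Convention for mapping cones: for a chain map $g:X\to Y$ (differentials of degree $+1$), $\mathrm{Cone}(g)=X[-1]\oplus Y$ with differential $\begin{pmatrix} d_X & 0\\ g\,\varepsilon_X & d_Y\end{pmatrix}$, where $\varepsilon_X$ is the identity in even homological degrees and minus the identity in odd degrees. *)

theory Defs
  imports Main
begin

record ('o, 'm) addcat =
  obj   :: "'o set"
  mor   :: "'m set"
  src   :: "'m \<Rightarrow> 'o"
  tgt   :: "'m \<Rightarrow> 'o"
  comp  :: "'m \<Rightarrow> 'm \<Rightarrow> 'm"      (* comp g f = g after f *)
  ident :: "'o \<Rightarrow> 'm"
  plus  :: "'m \<Rightarrow> 'm \<Rightarrow> 'm"
  negm  :: "'m \<Rightarrow> 'm"
  zer   :: "'o \<Rightarrow> 'o \<Rightarrow> 'm"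
  bsum  :: "'o \<Rightarrow> 'o \<Rightarrow> 'o"
  inj1  :: "'o \<Rightarrow> 'o \<Rightarrow> 'm"
  inj2  :: "'o \<Rightarrow> 'o \<Rightarrow> 'm"
  prj1  :: "'o \<Rightarrow> 'o \<Rightarrow> 'm"
  prj2  :: "'o \<Rightarrow> 'o \<Rightarrow> 'm"

definition hom :: "('o, 'm) addcat \<Rightarrow> 'o \<Rightarrow> 'o \<Rightarrow> 'm set" where
  "hom C A B = {m \<in> mor C. src C m = A \<and> tgt C m = B}"

definition subm :: "('o, 'm) addcat \<Rightarrow> 'm \<Rightarrow> 'm \<Rightarrow> 'm" where
  "subm C f g = plus C f (negm C g)"

definition additive_category :: "('o, 'm) addcat \<Rightarrow> bool" where
  "additive_category C \<longleftrightarrow>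
     \<comment> \<open>category\<close>
     (\<forall>m\<in>mor C. src C m \<in> obj C \<and> tgt C m \<in> obj C)
   \<and> (\<forall>A\<in>obj C. ident C A \<in> hom C A A)
   \<and> (\<forall>f\<in>mor C. \<forall>g\<in>mor C. tgt C f = src C g \<longrightarrow>
        comp C g f \<in> hom C (src C f) (tgt C g))
   \<and> (\<forall>f\<in>mor C. \<forall>g\<in>mor C. \<forall>h\<in>mor C. tgt C f = src C g \<and> tgt C g = src C h \<longrightarrow>
        comp C h (comp C g f) = comp C (comp C h g) f)
   \<and> (\<forall>f\<in>mor C. comp C (ident C (tgt C f)) f = f \<and> comp C f (ident C (src C f)) = f)
     \<comment> \<open>preadditive: abelian group structure on Hom-sets, bilinear composition\<close>
   \<and> (\<forall>A\<in>obj C. \<forall>B\<in>obj C. zer C A B \<in> hom C A B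
        \<and> (\<forall>f\<in>hom C A B. negm C f \<in> hom C A B
             \<and> plus C (zer C A B) f = f \<and> plus C f (negm C f) = zer C A B)
        \<and> (\<forall>f\<in>hom C A B. \<forall>g\<in>hom C A B. plus C f g \<in> hom C A B \<and> plus C f g = plus C g f)
        \<and> (\<forall>f\<in>hom C A B. \<forall>g\<in>hom C A B. \<forall>h\<in>hom C A B.
             plus C (plus C f g) h = plus C f (plus C g h)))
   \<and> (\<forall>A\<in>obj C. \<forall>B\<in>obj C. \<forall>D\<in>obj C. \<forall>f\<in>hom C A B. \<forall>g\<in>hom C A B. \<forall>h\<in>hom C B D.
        comp C h (plus C f g) = plus C (comp C h f) (comp C h g))
   \<and> (\<forall>A\<in>obj C. \<forall>B\<in>obj C. \<forall>D\<in>obj C. \<forall>h\<in>hom C A B. \<forall>f\<in>hom C B D. \<forall>g\<in>hom C B D.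
        comp C (plus C f g) h = plus C (comp C f h) (comp C g h))
     \<comment> \<open>zero object\<close>
   \<and> (\<exists>Z\<in>obj C. ident C Z = zer C Z Z)
     \<comment> \<open>binary biproducts (chosen)\<close>
   \<and> (\<forall>A\<in>obj C. \<forall>B\<in>obj C. bsum C A B \<in> obj C
        \<and> inj1 C A B \<in> hom C A (bsum C A B) \<and> inj2 C A B \<in> hom C B (bsum C A B)
        \<and> prj1 C A B \<in> hom C (bsum C A B) A \<and> prj2 C A B \<in> hom C (bsum C A B) B
        \<and> comp C (prj1 C A B) (inj1 C A B) = ident C A
        \<and> comp C (prj2 C A B) (inj2 C A B) = ident C B
        \<and> comp C (prj1 C A B) (inj2 C A B) = zer C B A
        \<and> comp C (prj2 C A B) (inj1 C A B) = zer C A B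
        \<and> plus C (comp C (inj1 C A B) (prj1 C A B)) (comp C (inj2 C A B) (prj2 C A B))
            = ident C (bsum C A B))"

definition additive_functor ::
  "('o, 'm) addcat \<Rightarrow> ('o \<Rightarrow> 'o) \<Rightarrow> ('m \<Rightarrow> 'm) \<Rightarrow> bool" where
  "additive_functor C Fo Fm \<longleftrightarrow>
     (\<forall>A\<in>obj C. Fo A \<in> obj C)
   \<and> (\<forall>f\<in>mor C. Fm f \<in> hom C (Fo (src C f)) (Fo (tgt C f)))
   \<and> (\<forall>A\<in>obj C. Fm (ident C A) = ident C (Fo A))
   \<and> (\<forall>f\<in>mor C. \<forall>g\<in>mor C. tgt C f = src C g \<longrightarrow> Fm (comp C g f) = comp C (Fm g) (Fm f))
   \<and> (\<forall>A\<in>obj C. \<forall>B\<in>obj C. \<forall>f\<in>hom C A B. \<forall>g\<in>hom C A B.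
        Fm (plus C f g) = plus C (Fm f) (Fm g))"

definition involutive_bar :: "('o, 'm) addcat \<Rightarrow> ('m \<Rightarrow> 'm) \<Rightarrow> bool" where
  "involutive_bar C bar \<longleftrightarrow>
     additive_functor C (\<lambda>A. A) bar \<and> (\<forall>f\<in>mor C. bar (bar f) = f)"

definition nat_trans ::
  "('o, 'm) addcat \<Rightarrow> ('o \<Rightarrow> 'o) \<Rightarrow> ('m \<Rightarrow> 'm) \<Rightarrow> ('o \<Rightarrow> 'o) \<Rightarrow> ('m \<Rightarrow> 'm)
     \<Rightarrow> ('o \<Rightarrow> 'm) \<Rightarrow> bool" where
  "nat_trans C Fo Fm Go Gm f \<longleftrightarrow>
     (\<forall>A\<in>obj C. f A \<in> hom C (Fo A) (Go A))
   \<and> (\<forall>\<phi>\<in>mor C. comp C (Gm \<phi>) (f (src C \<phi>)) = comp C (f (tgt C \<phi>)) (Fm \<phi>))"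

definition boundary_op ::
  "('o, 'm) addcat \<Rightarrow> ('o \<Rightarrow> 'o) \<Rightarrow> ('m \<Rightarrow> 'm) \<Rightarrow> ('o \<Rightarrow> 'o) \<Rightarrow> ('m \<Rightarrow> 'm)
     \<Rightarrow> ('m \<Rightarrow> 'm) \<Rightarrow> ('o \<Rightarrow> 'm) \<Rightarrow> ('m \<Rightarrow> 'm) \<Rightarrow> bool" where
  "boundary_op C Fo Fm Go Gm bar f bd \<longleftrightarrow>
     (\<forall>\<phi>\<in>mor C. bd \<phi> \<in> hom C (Go (src C \<phi>)) (Fo (tgt C \<phi>)))
   \<and> (\<forall>A\<in>obj C. \<forall>B\<in>obj C. \<forall>\<phi>\<in>hom C A B. \<forall>\<psi>\<in>hom C A B.
        bd (subm C \<phi> \<psi>) = subm C (bd \<phi>) (bd \<psi>))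
   \<and> (\<forall>\<phi>\<in>mor C.
        Gm (subm C \<phi> (bar \<phi>)) = comp C (f (tgt C \<phi>)) (bd \<phi>)
      \<and> Fm (subm C \<phi> (bar \<phi>)) = comp C (bd \<phi>) (f (src C \<phi>)))
   \<and> (\<forall>\<phi>\<in>mor C. \<forall>\<psi>\<in>mor C. tgt C \<phi> = src C \<psi> \<longrightarrow>
        bd (comp C \<psi> \<phi>) = plus C (comp C (bd \<psi>) (Gm \<phi>)) (comp C (Fm (bar \<psi>)) (bd \<phi>))
      \<and> bd (comp C \<psi> \<phi>) = plus C (comp C (bd \<psi>) (Gm (bar \<phi>))) (comp C (Fm \<psi>) (bd \<phi>)))"

type_synonym ('o, 'm) cplx = "(int \<Rightarrow> 'o) \<times> (int \<Rightarrow> 'm)"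

definition chain_complex :: "('o, 'm) addcat \<Rightarrow> ('o, 'm) cplx \<Rightarrow> bool" where
  "chain_complex C X \<longleftrightarrow>
     (\<forall>n. fst X n \<in> obj C \<and> snd X n \<in> hom C (fst X n) (fst X (n + 1))
        \<and> comp C (snd X (n + 1)) (snd X n) = zer C (fst X n) (fst X (n + 2)))"

definition chain_map :: "('o, 'm) addcat \<Rightarrow> ('o, 'm) cplx \<Rightarrow> ('o, 'm) cplx \<Rightarrow> (int \<Rightarrow> 'm) \<Rightarrow> bool" where
  "chain_map C X Y g \<longleftrightarrow>
     (\<forall>n. g n \<in> hom C (fst X n) (fst Y n)
        \<and> comp C (snd Y n) (g n) = comp C (g (n + 1)) (snd X n))"

definition cplx_iso :: "('o, 'm) addcat \<Rightarrow> ('o, 'm) cplx \<Rightarrow> ('o, 'm) cplx \<Rightarrow> bool" where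
  "cplx_iso C X Y \<longleftrightarrow>
     (\<exists>g h. chain_map C X Y g \<and> chain_map C Y X h
        \<and> (\<forall>n. comp C (h n) (g n) = ident C (fst X n) \<and> comp C (g n) (h n) = ident C (fst Y n)))"

text \<open>Morphism \<open>A1 \<oplus> A2 \<rightarrow> B1 \<oplus> B2\<close> given by the matrix \<open>(m11 m12; m21 m22)\<close>, \<open>mij : Aj \<rightarrow> Bi\<close>.\<close>
definition bmat :: "('o, 'm) addcat \<Rightarrow> 'o \<Rightarrow> 'o \<Rightarrow> 'o \<Rightarrow> 'o \<Rightarrow> 'm \<Rightarrow> 'm \<Rightarrow> 'm \<Rightarrow> 'm \<Rightarrow> 'm" where
  "bmat C A1 A2 B1 B2 m11 m12 m21 m22 =
     plus C
       (plus C (comp C (inj1 C B1 B2) (comp C m11 (prj1 C A1 A2)))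
               (comp C (inj1 C B1 B2) (comp C m12 (prj2 C A1 A2))))
       (plus C (comp C (inj2 C B1 B2) (comp C m21 (prj1 C A1 A2)))
               (comp C (inj2 C B1 B2) (comp C m22 (prj2 C A1 A2))))"

definition eps :: "('o, 'm) addcat \<Rightarrow> int \<Rightarrow> 'o \<Rightarrow> 'm" where
  "eps C k A = (if even k then ident C A else negm C (ident C A))"

text \<open>\<open>Cone(g) = X[-1] \<oplus> Y\<close>, with \<open>X[-1]^n = X^(n+1)\<close> and differential
  \<open>(d_X 0; g \<epsilon>_X d_Y)\<close>.\<close>
definition cone :: "('o, 'm) addcat \<Rightarrow> ('o, 'm) cplx \<Rightarrow> ('o, 'm) cplx \<Rightarrow> (int \<Rightarrow> 'm) \<Rightarrow> ('o, 'm) cplx" where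
  "cone C X Y g =
     (\<lambda>n. bsum C (fst X (n + 1)) (fst Y n),
      \<lambda>n. bmat C (fst X (n + 1)) (fst Y n) (fst X (n + 2)) (fst Y (n + 1))
             (snd X (n + 1))
             (zer C (fst Y n) (fst X (n + 2)))
             (comp C (g (n + 1)) (eps C (n + 1) (fst X (n + 1))))
             (snd Y n))"

definition fun_cplx :: "('o \<Rightarrow> 'o) \<Rightarrow> ('m \<Rightarrow> 'm) \<Rightarrow> ('o, 'm) cplx \<Rightarrow> ('o, 'm) cplx" where
  "fun_cplx Fo Fm X = (\<lambda>n. Fo (fst X n), \<lambda>n. Fm (snd X n))"

definition bar_cplx :: "('m \<Rightarrow> 'm) \<Rightarrow> ('o, 'm) cplx \<Rightarrow> ('o, 'm) cplx" where
  "bar_cplx bar X = (fst X, \<lambda>n. bar (snd X n))"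

definition nt_cplx :: "('o \<Rightarrow> 'm) \<Rightarrow> ('o, 'm) cplx \<Rightarrow> int \<Rightarrow> 'm" where
  "nt_cplx f X = (\<lambda>n. f (fst X n))"

end

theory Submission
  imports Defs
begin

(* In degree n both cones are F X^(n+1) \<oplus> G X^n, and the isomorphism is the unitriangular
   matrix (1, \<epsilon>_(n+1) \<partial>d^n; 0, 1), whose inverse has the negated corner.
   Compatibility with the two cone differentials is checked entrywise: property (2) gives
   F d - F (bar d) = \<partial>d f and G d - G (bar d) = f \<partial>d for the diagonal entries, and the
   Leibniz rule (3) applied to d^(n+1) d^n = 0 (with \<partial>0 = 0 by linearity) gives
   F (bar d^(n+1)) \<partial>d^n = - \<partial>d^(n+1) G d^n for the corner; the signs
   \<epsilon>_(n+2) = - \<epsilon>_(n+1) absorb the minus signs. *)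

lemma in_hom_iff: "f \<in> hom C A B \<longleftrightarrow> f \<in> mor C \<and> src C f = A \<and> tgt C f = B"
  by (simp add: hom_def)

locale additive_cat =
  fixes C :: "('o, 'm) addcat"
  assumes additive: "additive_category C"
begin

lemmas category_axioms = additive[unfolded additive_category_def]

lemma src_obj [simp]: "f \<in> mor C \<Longrightarrow> src C f \<in> obj C"
  using category_axioms by auto

lemma tgt_obj [simp]: "f \<in> mor C \<Longrightarrow> tgt C f \<in> obj C"
  using category_axioms by auto

lemma ident_mor [simp]:
  "A \<in> obj C \<Longrightarrow> ident C A \<in> mor C"
  "A \<in> obj C \<Longrightarrow> src C (ident C A) = A"
  "A \<in> obj C \<Longrightarrow> tgt C (ident C A) = A"
  using category_axioms by (auto simp: in_hom_iff)

lemma comp_mor [simp]: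
  assumes "f \<in> mor C" "g \<in> mor C" "tgt C f = src C g"
  shows "comp C g f \<in> mor C" "src C (comp C g f) = src C f" "tgt C (comp C g f) = tgt C g"
  using category_axioms assms by (auto simp: in_hom_iff)

lemma comp_assoc [simp]:
  "\<lbrakk>f \<in> mor C; g \<in> mor C; h \<in> mor C; tgt C f = src C g; tgt C g = src C h\<rbrakk>
   \<Longrightarrow> comp C (comp C h g) f = comp C h (comp C g f)"
  using category_axioms by simp

lemma comp_ident_left [simp]: "\<lbrakk>f \<in> mor C; tgt C f = B\<rbrakk> \<Longrightarrow> comp C (ident C B) f = f"
  using category_axioms by auto

lemma comp_ident_right [simp]: "\<lbrakk>f \<in> mor C; src C f = A\<rbrakk> \<Longrightarrow> comp C f (ident C A) = f"
  using category_axioms by auto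

lemmas hom_group_axioms = category_axioms
  [THEN conjunct2, THEN conjunct2, THEN conjunct2, THEN conjunct2, THEN conjunct2, THEN conjunct1]
lemmas comp_plus_right_axiom = category_axioms
  [THEN conjunct2, THEN conjunct2, THEN conjunct2, THEN conjunct2, THEN conjunct2, THEN conjunct2,
   THEN conjunct1]
lemmas comp_plus_left_axiom = category_axioms
  [THEN conjunct2, THEN conjunct2, THEN conjunct2, THEN conjunct2, THEN conjunct2, THEN conjunct2,
   THEN conjunct2, THEN conjunct1]
lemmas biprod_axioms = category_axioms
  [THEN conjunct2, THEN conjunct2, THEN conjunct2, THEN conjunct2, THEN conjunct2, THEN conjunct2,
   THEN conjunct2, THEN conjunct2, THEN conjunct2]

lemma zer_mor [simp]:
  "A \<in> obj C \<Longrightarrow> B \<in> obj C \<Longrightarrow> zer C A B \<in> mor C"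
  "A \<in> obj C \<Longrightarrow> B \<in> obj C \<Longrightarrow> src C (zer C A B) = A"
  "A \<in> obj C \<Longrightarrow> B \<in> obj C \<Longrightarrow> tgt C (zer C A B) = B"
  using hom_group_axioms by (auto simp: in_hom_iff)

lemma neg_mor [simp]:
  assumes "f \<in> mor C"
  shows "negm C f \<in> mor C" "src C (negm C f) = src C f" "tgt C (negm C f) = tgt C f"
  using hom_group_axioms assms by (metis in_hom_iff src_obj tgt_obj)+

lemma plus_mor [simp]:
  assumes "f \<in> mor C" "g \<in> mor C" "src C g = src C f" "tgt C g = tgt C f"
  shows "plus C f g \<in> mor C" "src C (plus C f g) = src C f" "tgt C (plus C f g) = tgt C f"
  using hom_group_axioms assms by (metis in_hom_iff src_obj tgt_obj)+

lemma plus_commute: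
  "\<lbrakk>f \<in> mor C; g \<in> mor C; src C g = src C f; tgt C g = tgt C f\<rbrakk> \<Longrightarrow> plus C f g = plus C g f"
  using hom_group_axioms by (metis in_hom_iff src_obj tgt_obj)

lemma plus_assoc [simp]:
  "\<lbrakk>f \<in> mor C; g \<in> mor C; h \<in> mor C; src C g = src C f; tgt C g = tgt C f;
    src C h = src C f; tgt C h = tgt C f\<rbrakk>
   \<Longrightarrow> plus C (plus C f g) h = plus C f (plus C g h)"
  using hom_group_axioms by (metis in_hom_iff src_obj tgt_obj)

lemma plus_left_commute:
  "\<lbrakk>f \<in> mor C; g \<in> mor C; h \<in> mor C; src C g = src C f; tgt C g = tgt C f;
    src C h = src C f; tgt C h = tgt C f\<rbrakk>
   \<Longrightarrow> plus C f (plus C g h) = plus C g (plus C f h)"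
  by (metis plus_assoc plus_commute)

lemma zer_plus [simp]: "\<lbrakk>f \<in> mor C; src C f = A; tgt C f = B\<rbrakk> \<Longrightarrow> plus C (zer C A B) f = f"
  using hom_group_axioms by (metis in_hom_iff src_obj tgt_obj)

lemma plus_zer [simp]: "\<lbrakk>f \<in> mor C; src C f = A; tgt C f = B\<rbrakk> \<Longrightarrow> plus C f (zer C A B) = f"
  by (metis plus_commute src_obj tgt_obj zer_mor zer_plus)

lemma plus_neg [simp]: "f \<in> mor C \<Longrightarrow> plus C f (negm C f) = zer C (src C f) (tgt C f)"
  using hom_group_axioms by (metis in_hom_iff src_obj tgt_obj)

lemma neg_plus [simp]: "f \<in> mor C \<Longrightarrow> plus C (negm C f) f = zer C (src C f) (tgt C f)"
  by (metis neg_mor plus_commute plus_neg)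

lemma comp_plus_right:
  "\<lbrakk>f \<in> mor C; g \<in> mor C; h \<in> mor C; src C g = src C f; tgt C g = tgt C f; tgt C f = src C h\<rbrakk>
   \<Longrightarrow> comp C h (plus C f g) = plus C (comp C h f) (comp C h g)"
  using comp_plus_right_axiom by (metis in_hom_iff src_obj tgt_obj)

lemma comp_plus_left:
  "\<lbrakk>f \<in> mor C; g \<in> mor C; h \<in> mor C; src C g = src C f; tgt C g = tgt C f; tgt C h = src C f\<rbrakk>
   \<Longrightarrow> comp C (plus C f g) h = plus C (comp C f h) (comp C g h)"
  using comp_plus_left_axiom by (metis in_hom_iff src_obj tgt_obj)

lemma zer_of_idem:
  assumes "x \<in> mor C" "plus C x x = x"
  shows "x = zer C (src C x) (tgt C x)"
proof -
  have "x = plus C x (plus C x (negm C x))" using assms by simp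
  also have "\<dots> = plus C (plus C x x) (negm C x)" using assms by (subst plus_assoc) auto
  also have "\<dots> = zer C (src C x) (tgt C x)" using assms by simp
  finally show ?thesis .
qed

lemma neg_unique:
  assumes "a \<in> mor C" "b \<in> mor C" "src C b = src C a" "tgt C b = tgt C a"
    and "plus C a b = zer C (src C a) (tgt C a)"
  shows "b = negm C a"
proof -
  have "b = plus C (plus C (negm C a) a) b" using assms by simp
  also have "\<dots> = plus C (negm C a) (plus C a b)" using assms by (subst plus_assoc) auto
  also have "\<dots> = negm C a" using assms by simp
  finally show ?thesis .
qed

lemma neg_neg [simp]: "f \<in> mor C \<Longrightarrow> negm C (negm C f) = f"
  by (metis neg_plus neg_mor neg_unique)

lemma comp_zer_right [simp]:
  assumes "h \<in> mor C" "src C h = B" "A \<in> obj C"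
  shows "comp C h (zer C A B) = zer C A (tgt C h)"
proof -
  let ?x = "comp C h (zer C A B)"
  have "B \<in> obj C" using assms by auto
  with assms have "?x = comp C h (plus C (zer C A B) (zer C A B))" by simp
  also have "\<dots> = plus C ?x ?x" using assms \<open>B \<in> obj C\<close> by (intro comp_plus_right) auto
  finally have "plus C ?x ?x = ?x" by (rule sym)
  then have "?x = zer C (src C ?x) (tgt C ?x)"
    by (rule zer_of_idem[rotated]) (use assms \<open>B \<in> obj C\<close> in simp)
  then show ?thesis using assms \<open>B \<in> obj C\<close> by simp
qed

lemma comp_zer_left [simp]:
  assumes "g \<in> mor C" "tgt C g = B" "D \<in> obj C"
  shows "comp C (zer C B D) g = zer C (src C g) D"
proof -
  let ?x = "comp C (zer C B D) g"
  have "B \<in> obj C" using assms by auto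
  with assms have "?x = comp C (plus C (zer C B D) (zer C B D)) g" by simp
  also have "\<dots> = plus C ?x ?x" using assms \<open>B \<in> obj C\<close> by (intro comp_plus_left) auto
  finally have "plus C ?x ?x = ?x" by (rule sym)
  then have "?x = zer C (src C ?x) (tgt C ?x)"
    by (rule zer_of_idem[rotated]) (use assms \<open>B \<in> obj C\<close> in simp)
  then show ?thesis using assms \<open>B \<in> obj C\<close> by simp
qed

lemma comp_neg_right [simp]:
  assumes "f \<in> mor C" "h \<in> mor C" "tgt C f = src C h"
  shows "comp C h (negm C f) = negm C (comp C h f)"
  using assms by (intro neg_unique) (simp_all flip: comp_plus_right)

lemma comp_neg_left [simp]:
  assumes "f \<in> mor C" "h \<in> mor C" "tgt C f = src C h"
  shows "comp C (negm C h) f = negm C (comp C h f)"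
  using assms by (intro neg_unique) (simp_all flip: comp_plus_left)

lemma neg_plus_distrib:
  assumes "f \<in> mor C" "g \<in> mor C" "src C g = src C f" "tgt C g = tgt C f"
  shows "negm C (plus C f g) = plus C (negm C f) (negm C g)"
proof (rule neg_unique[symmetric])
  have "plus C g (plus C (negm C f) (negm C g)) = plus C (negm C f) (plus C g (negm C g))"
    using assms by (metis neg_mor plus_assoc plus_commute)
  then show "plus C (plus C f g) (plus C (negm C f) (negm C g))
      = zer C (src C (plus C f g)) (tgt C (plus C f g))"
    using assms by simp
qed (use assms in auto)

lemma eps_mor [simp]:
  assumes "A \<in> obj C"
  shows "eps C k A \<in> mor C" "src C (eps C k A) = A" "tgt C (eps C k A) = A"
  using assms by (auto simp: eps_def)

lemma biprod_mor [simp]: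
  assumes "A \<in> obj C" "B \<in> obj C"
  shows "bsum C A B \<in> obj C"
    "inj1 C A B \<in> mor C" "src C (inj1 C A B) = A" "tgt C (inj1 C A B) = bsum C A B"
    "inj2 C A B \<in> mor C" "src C (inj2 C A B) = B" "tgt C (inj2 C A B) = bsum C A B"
    "prj1 C A B \<in> mor C" "src C (prj1 C A B) = bsum C A B" "tgt C (prj1 C A B) = A"
    "prj2 C A B \<in> mor C" "src C (prj2 C A B) = bsum C A B" "tgt C (prj2 C A B) = B"
  using biprod_axioms assms by (simp_all add: in_hom_iff)

lemma prj_inj [simp]:
  assumes "A \<in> obj C" "B \<in> obj C"
  shows "comp C (prj1 C A B) (inj1 C A B) = ident C A"
    "comp C (prj2 C A B) (inj2 C A B) = ident C B"
    "comp C (prj1 C A B) (inj2 C A B) = zer C B A"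
    "comp C (prj2 C A B) (inj1 C A B) = zer C A B"
  using biprod_axioms assms by simp_all

(* The same identities with a trailing factor, to match the right-associated normal form
   produced by comp_assoc. *)
lemma prj_inj_comp [simp]:
  assumes "A \<in> obj C" "B \<in> obj C" "x \<in> mor C"
  shows "tgt C x = A \<Longrightarrow> comp C (prj1 C A B) (comp C (inj1 C A B) x) = x"
    "tgt C x = B \<Longrightarrow> comp C (prj2 C A B) (comp C (inj2 C A B) x) = x"
    "tgt C x = B \<Longrightarrow> comp C (prj1 C A B) (comp C (inj2 C A B) x) = zer C (src C x) A"
    "tgt C x = A \<Longrightarrow> comp C (prj2 C A B) (comp C (inj1 C A B) x) = zer C (src C x) B"
  using assms by (simp_all flip: comp_assoc)

lemma inj_prj_sum:
  assumes "A \<in> obj C" "B \<in> obj C"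
  shows "plus C (comp C (inj1 C A B) (prj1 C A B)) (comp C (inj2 C A B) (prj2 C A B))
    = ident C (bsum C A B)"
  using biprod_axioms assms by simp

lemma biprod_decompose:
  assumes "A \<in> obj C" "B \<in> obj C" "x \<in> mor C" "tgt C x = bsum C A B"
  shows "x = plus C (comp C (inj1 C A B) (comp C (prj1 C A B) x))
                    (comp C (inj2 C A B) (comp C (prj2 C A B) x))"
proof -
  have "x = comp C (plus C (comp C (inj1 C A B) (prj1 C A B)) (comp C (inj2 C A B) (prj2 C A B))) x"
    using assms by (simp add: inj_prj_sum)
  also have "\<dots> = plus C (comp C (inj1 C A B) (comp C (prj1 C A B) x))
                          (comp C (inj2 C A B) (comp C (prj2 C A B) x))"
    using assms by (simp add: comp_plus_left)
  finally show ?thesis .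
qed

lemma biprod_eqI:
  assumes "A \<in> obj C" "B \<in> obj C"
    and "u \<in> mor C" "tgt C u = bsum C A B" "v \<in> mor C" "tgt C v = bsum C A B"
    and "comp C (prj1 C A B) u = comp C (prj1 C A B) v"
    and "comp C (prj2 C A B) u = comp C (prj2 C A B) v"
  shows "u = v"
  using biprod_decompose[of A B u] biprod_decompose[of A B v] assms by simp

lemma bmat_mor [simp]:
  assumes "A1 \<in> obj C" "A2 \<in> obj C" "B1 \<in> obj C" "B2 \<in> obj C"
    "m11 \<in> hom C A1 B1" "m12 \<in> hom C A2 B1" "m21 \<in> hom C A1 B2" "m22 \<in> hom C A2 B2"
  shows "bmat C A1 A2 B1 B2 m11 m12 m21 m22 \<in> mor C"
    "src C (bmat C A1 A2 B1 B2 m11 m12 m21 m22) = bsum C A1 A2"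
    "tgt C (bmat C A1 A2 B1 B2 m11 m12 m21 m22) = bsum C B1 B2"
  using assms by (auto simp: bmat_def in_hom_iff)

lemma prj_bmat:
  assumes "A1 \<in> obj C" "A2 \<in> obj C" "B1 \<in> obj C" "B2 \<in> obj C"
    "m11 \<in> hom C A1 B1" "m12 \<in> hom C A2 B1" "m21 \<in> hom C A1 B2" "m22 \<in> hom C A2 B2"
  shows "comp C (prj1 C B1 B2) (bmat C A1 A2 B1 B2 m11 m12 m21 m22)
      = plus C (comp C m11 (prj1 C A1 A2)) (comp C m12 (prj2 C A1 A2))"
    "comp C (prj2 C B1 B2) (bmat C A1 A2 B1 B2 m11 m12 m21 m22)
      = plus C (comp C m21 (prj1 C A1 A2)) (comp C m22 (prj2 C A1 A2))"
    "\<lbrakk>q \<in> mor C; tgt C q = bsum C A1 A2\<rbrakk> \<Longrightarrow>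
      comp C (prj1 C B1 B2) (comp C (bmat C A1 A2 B1 B2 m11 m12 m21 m22) q)
      = plus C (comp C m11 (comp C (prj1 C A1 A2) q)) (comp C m12 (comp C (prj2 C A1 A2) q))"
    "\<lbrakk>q \<in> mor C; tgt C q = bsum C A1 A2\<rbrakk> \<Longrightarrow>
      comp C (prj2 C B1 B2) (comp C (bmat C A1 A2 B1 B2 m11 m12 m21 m22) q)
      = plus C (comp C m21 (comp C (prj1 C A1 A2) q)) (comp C m22 (comp C (prj2 C A1 A2) q))"
  using assms unfolding in_hom_iff by (simp_all add: bmat_def comp_plus_left comp_plus_right)

lemma bmat_comp:
  assumes "A1 \<in> obj C" "A2 \<in> obj C" "B1 \<in> obj C" "B2 \<in> obj C" "D1 \<in> obj C" "D2 \<in> obj C"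
    "m11 \<in> hom C A1 B1" "m12 \<in> hom C A2 B1" "m21 \<in> hom C A1 B2" "m22 \<in> hom C A2 B2"
    "n11 \<in> hom C B1 D1" "n12 \<in> hom C B2 D1" "n21 \<in> hom C B1 D2" "n22 \<in> hom C B2 D2"
  shows "comp C (bmat C B1 B2 D1 D2 n11 n12 n21 n22) (bmat C A1 A2 B1 B2 m11 m12 m21 m22)
    = bmat C A1 A2 D1 D2
        (plus C (comp C n11 m11) (comp C n12 m21)) (plus C (comp C n11 m12) (comp C n12 m22))
        (plus C (comp C n21 m11) (comp C n22 m21)) (plus C (comp C n21 m12) (comp C n22 m22))"
  by (rule biprod_eqI[of D1 D2])
    (use assms in \<open>simp_all add: in_hom_iff prj_bmat comp_plus_left comp_plus_right
      plus_left_commute\<close>)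

lemma bmat_ident:
  assumes "A1 \<in> obj C" "A2 \<in> obj C"
  shows "bmat C A1 A2 A1 A2 (ident C A1) (zer C A2 A1) (zer C A1 A2) (ident C A2)
    = ident C (bsum C A1 A2)"
  using assms inj_prj_sum[OF assms] by (simp add: bmat_def)

definition unitriangular :: "'o \<Rightarrow> 'o \<Rightarrow> 'm \<Rightarrow> 'm" where
  "unitriangular A1 A2 K = bmat C A1 A2 A1 A2 (ident C A1) K (zer C A1 A2) (ident C A2)"

lemma unitriangular_mor [simp]:
  assumes "A1 \<in> obj C" "A2 \<in> obj C" "K \<in> hom C A2 A1"
  shows "unitriangular A1 A2 K \<in> mor C"
    "src C (unitriangular A1 A2 K) = bsum C A1 A2" "tgt C (unitriangular A1 A2 K) = bsum C A1 A2"
  using assms by (auto simp: unitriangular_def in_hom_iff)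

lemma unitriangular_zer:
  "\<lbrakk>A1 \<in> obj C; A2 \<in> obj C\<rbrakk> \<Longrightarrow> unitriangular A1 A2 (zer C A2 A1) = ident C (bsum C A1 A2)"
  by (simp add: unitriangular_def bmat_ident)

lemma unitriangular_comp:
  assumes "A1 \<in> obj C" "A2 \<in> obj C" "K \<in> hom C A2 A1" "L \<in> hom C A2 A1"
  shows "comp C (unitriangular A1 A2 K) (unitriangular A1 A2 L) = unitriangular A1 A2 (plus C L K)"
  using assms unfolding unitriangular_def
  by (subst bmat_comp) (auto simp: in_hom_iff)

lemma unitriangular_inverse:
  assumes "A1 \<in> obj C" "A2 \<in> obj C" "K \<in> hom C A2 A1"
  shows "comp C (unitriangular A1 A2 (negm C K)) (unitriangular A1 A2 K) = ident C (bsum C A1 A2)"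
    "comp C (unitriangular A1 A2 K) (unitriangular A1 A2 (negm C K)) = ident C (bsum C A1 A2)"
proof -
  from assms(3) have K: "K \<in> mor C" "src C K = A2" "tgt C K = A1" by (simp_all add: in_hom_iff)
  then have "negm C K \<in> hom C A2 A1" by (simp add: in_hom_iff)
  with assms K show "comp C (unitriangular A1 A2 (negm C K)) (unitriangular A1 A2 K)
      = ident C (bsum C A1 A2)"
    "comp C (unitriangular A1 A2 K) (unitriangular A1 A2 (negm C K)) = ident C (bsum C A1 A2)"
    by (simp_all add: unitriangular_comp unitriangular_zer)
qed

lemma chain_map_inverse:
  assumes g: "chain_map C X Y g" and h: "\<And>n. h n \<in> hom C (fst Y n) (fst X n)"
    and hg: "\<And>n. comp C (h n) (g n) = ident C (fst X n)"
    and gh: "\<And>n. comp C (g n) (h n) = ident C (fst Y n)"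
    and dX: "\<And>n. snd X n \<in> hom C (fst X n) (fst X (n + 1))"
    and dY: "\<And>n. snd Y n \<in> hom C (fst Y n) (fst Y (n + 1))"
  shows "chain_map C Y X h"
  unfolding chain_map_def
proof (intro allI conjI)
  fix n
  show "h n \<in> hom C (fst Y n) (fst X n)" by (rule h)
  have g_hom: "\<And>n. g n \<in> hom C (fst X n) (fst Y n)"
    and g_comm: "\<And>n. comp C (snd Y n) (g n) = comp C (g (n + 1)) (snd X n)"
    using g unfolding chain_map_def by auto
  note typing = g_hom[unfolded in_hom_iff] h[unfolded in_hom_iff]
    dX[unfolded in_hom_iff] dY[unfolded in_hom_iff]
  have "comp C (snd X n) (h n) = comp C (h (n + 1)) (comp C (comp C (g (n + 1)) (snd X n)) (h n))"
    using typing hg by (simp flip: comp_assoc)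
  also have "\<dots> = comp C (h (n + 1)) (comp C (comp C (snd Y n) (g n)) (h n))"
    by (simp only: g_comm)
  also have "\<dots> = comp C (h (n + 1)) (snd Y n)"
    using typing gh by simp
  finally show "comp C (snd X n) (h n) = comp C (h (n + 1)) (snd Y n)" .
qed

end

locale additive_endofunctor = additive_cat C for C :: "('o, 'm) addcat" +
  fixes Fo :: "'o \<Rightarrow> 'o" and Fm :: "'m \<Rightarrow> 'm"
  assumes is_functor: "additive_functor C Fo Fm"
begin

lemma obj_closed [simp]: "A \<in> obj C \<Longrightarrow> Fo A \<in> obj C"
  using is_functor unfolding additive_functor_def by blast

lemma map_mor [simp]:
  assumes "g \<in> mor C"
  shows "Fm g \<in> mor C" "src C (Fm g) = Fo (src C g)" "tgt C (Fm g) = Fo (tgt C g)"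
  using is_functor assms unfolding additive_functor_def in_hom_iff by blast+

lemma map_plus:
  assumes "g \<in> mor C" "h \<in> mor C" "src C h = src C g" "tgt C h = tgt C g"
  shows "Fm (plus C g h) = plus C (Fm g) (Fm h)"
  using is_functor assms unfolding additive_functor_def by (metis in_hom_iff src_obj tgt_obj)

lemma map_zer:
  assumes "A \<in> obj C" "B \<in> obj C"
  shows "Fm (zer C A B) = zer C (Fo A) (Fo B)"
proof -
  let ?x = "Fm (zer C A B)"
  have "?x = Fm (plus C (zer C A B) (zer C A B))" using assms by simp
  also have "\<dots> = plus C ?x ?x" using assms by (intro map_plus) auto
  finally have "plus C ?x ?x = ?x" by (rule sym)
  then have "?x = zer C (src C ?x) (tgt C ?x)"
    by (rule zer_of_idem[rotated]) (use assms in simp)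
  then show ?thesis using assms by simp
qed

lemma map_neg:
  assumes "g \<in> mor C"
  shows "Fm (negm C g) = negm C (Fm g)"
  using assms by (intro neg_unique) (simp_all add: map_zer flip: map_plus)

end

locale cone_setting =
  additive_cat C + F: additive_endofunctor C Fo Fm + G: additive_endofunctor C Go Gm +
  Bar: additive_endofunctor C "\<lambda>A. A" bar
  for C :: "('o, 'm) addcat" and Fo Go :: "'o \<Rightarrow> 'o" and Fm Gm bar :: "'m \<Rightarrow> 'm" +
  fixes f :: "'o \<Rightarrow> 'm" and bd :: "'m \<Rightarrow> 'm"
  assumes nat: "nat_trans C Fo Fm Go Gm f"
    and boundary: "boundary_op C Fo Fm Go Gm bar f bd"
begin

lemma f_mor [simp]:
  assumes "A \<in> obj C"
  shows "f A \<in> mor C" "src C (f A) = Fo A" "tgt C (f A) = Go A"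
  using nat assms unfolding nat_trans_def in_hom_iff by auto

lemma bd_mor [simp]:
  assumes "g \<in> mor C"
  shows "bd g \<in> mor C" "src C (bd g) = Go (src C g)" "tgt C (bd g) = Fo (tgt C g)"
  using boundary assms unfolding boundary_op_def in_hom_iff by auto

lemma G_diff_bar: "g \<in> mor C \<Longrightarrow> Gm (subm C g (bar g)) = comp C (f (tgt C g)) (bd g)"
  using boundary unfolding boundary_op_def by blast

lemma F_diff_bar: "g \<in> mor C \<Longrightarrow> Fm (subm C g (bar g)) = comp C (bd g) (f (src C g))"
  using boundary unfolding boundary_op_def by blast

lemma bd_comp:
  "\<lbrakk>g \<in> mor C; h \<in> mor C; tgt C g = src C h\<rbrakk>
   \<Longrightarrow> bd (comp C h g) = plus C (comp C (bd h) (Gm g)) (comp C (Fm (bar h)) (bd g))"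
  using boundary unfolding boundary_op_def by blast

lemma bd_zer:
  assumes "A \<in> obj C" "B \<in> obj C"
  shows "bd (zer C A B) = zer C (Go A) (Fo B)"
proof -
  have "bd (zer C A B) = bd (subm C (zer C A B) (zer C A B))"
    using assms by (simp add: subm_def)
  also have "\<dots> = subm C (bd (zer C A B)) (bd (zer C A B))"
    using boundary assms unfolding boundary_op_def by (simp add: in_hom_iff)
  also have "\<dots> = zer C (Go A) (Fo B)"
    using assms by (simp add: subm_def)
  finally show ?thesis .
qed

definition twist :: "int \<Rightarrow> 'm \<Rightarrow> 'm" where
  "twist n d = comp C (eps C (n + 1) (Fo (tgt C d))) (bd d)"

(* cone_diff n (d n) (d (n + 1)) is the degree-n differential of Cone(f_X); the objects
   are recovered as sources and targets of the two differentials. *)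
definition cone_diff :: "int \<Rightarrow> 'm \<Rightarrow> 'm \<Rightarrow> 'm" where
  "cone_diff n d0 d1 =
     bmat C (Fo (src C d1)) (Go (src C d0)) (Fo (tgt C d1)) (Go (tgt C d0))
       (Fm d1) (zer C (Go (src C d0)) (Fo (tgt C d1)))
       (comp C (f (src C d1)) (eps C (n + 1) (Fo (src C d1)))) (Gm d0)"

lemma twist_mor [simp]:
  assumes "d \<in> mor C"
  shows "twist n d \<in> mor C" "src C (twist n d) = Go (src C d)" "tgt C (twist n d) = Fo (tgt C d)"
  using assms by (simp_all add: twist_def)

lemma F_bar_eq:
  assumes "d \<in> mor C"
  shows "Fm (bar d) = plus C (Fm d) (comp C (twist (n + 1) d)
                              (comp C (f (src C d)) (eps C (n + 1) (Fo (src C d)))))"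
proof -
  have "comp C (twist (n + 1) d) (comp C (f (src C d)) (eps C (n + 1) (Fo (src C d))))
      = negm C (comp C (bd d) (f (src C d)))"
    using assms by (cases "even n") (simp_all add: twist_def eps_def)
  also have "\<dots> = negm C (plus C (Fm d) (negm C (Fm (bar d))))"
    using assms by (simp add: subm_def F.map_plus F.map_neg flip: F_diff_bar)
  finally show ?thesis
    using assms by (simp add: neg_plus_distrib flip: plus_assoc)
qed

lemma G_bar_eq:
  assumes "d \<in> mor C"
  shows "plus C (comp C (f (tgt C d)) (comp C (eps C (n + 1) (Fo (tgt C d))) (twist n d)))
                (Gm (bar d))
       = Gm d"
proof -
  have "comp C (f (tgt C d)) (bd d) = plus C (Gm d) (negm C (Gm (bar d)))"
    using assms by (simp add: subm_def G.map_plus G.map_neg flip: G_diff_bar)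
  then show ?thesis
    using assms by (simp add: twist_def eps_def)
qed

lemma F_bar_twist:
  assumes "d0 \<in> mor C" "d1 \<in> mor C" "tgt C d0 = src C d1"
    and "comp C d1 d0 = zer C (src C d0) (tgt C d1)"
  shows "comp C (Fm (bar d1)) (twist n d0) = comp C (twist (n + 1) d1) (Gm d0)"
proof -
  have "plus C (comp C (bd d1) (Gm d0)) (comp C (Fm (bar d1)) (bd d0))
      = zer C (Go (src C d0)) (Fo (tgt C d1))"
    using assms by (simp add: bd_zer flip: bd_comp)
  then have "comp C (Fm (bar d1)) (bd d0) = negm C (comp C (bd d1) (Gm d0))"
    using assms by (intro neg_unique) simp_all
  then show ?thesis
    using assms by (cases "even n") (simp_all add: twist_def eps_def)
qed

lemma cone_diff_twist:
  assumes "d0 \<in> mor C" "d1 \<in> mor C" "tgt C d0 = src C d1"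
    and "comp C d1 d0 = zer C (src C d0) (tgt C d1)"
  shows "comp C (cone_diff n (bar d0) (bar d1))
            (unitriangular (Fo (tgt C d0)) (Go (src C d0)) (twist n d0))
       = comp C (unitriangular (Fo (tgt C d1)) (Go (tgt C d0)) (twist (n + 1) d1))
            (cone_diff n d0 d1)"
  using assms G_bar_eq[of d0 n] F_bar_twist[OF assms, of n] F_bar_eq[of d1 n, symmetric]
  unfolding cone_diff_def unitriangular_def by (simp add: bmat_comp in_hom_iff)

lemma cone_diff_mor:
  assumes "d0 \<in> mor C" "d1 \<in> mor C" "tgt C d0 = src C d1"
  shows "cone_diff n d0 d1 \<in> hom C (bsum C (Fo (src C d1)) (Go (src C d0)))
                                  (bsum C (Fo (tgt C d1)) (Go (tgt C d0)))"
  using assms by (simp add: cone_diff_def in_hom_iff)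

lemma cone_iso:
  assumes "chain_complex C X"
  shows "cplx_iso C
           (cone C (fun_cplx Fo Fm X) (fun_cplx Go Gm X) (nt_cplx f X))
           (cone C (fun_cplx Fo Fm (bar_cplx bar X)) (fun_cplx Go Gm (bar_cplx bar X))
                 (nt_cplx f (bar_cplx bar X)))"
    (is "cplx_iso C ?cone ?cone_bar")
proof -
  define A d where "A = fst X" and "d = snd X"
  have A: "A n \<in> obj C" and d: "d n \<in> mor C" "src C (d n) = A n" "tgt C (d n) = A (n + 1)"
    and dd: "comp C (d (n + 1)) (d n) = zer C (A n) (A (n + 2))" for n
    using assms unfolding chain_complex_def A_def d_def in_hom_iff by auto
  have two_plus: "2 + n = n + 2" for n :: int by simp
  have objects: "fst ?cone n = bsum C (Fo (A (n + 1))) (Go (A n))"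
      "fst ?cone_bar n = bsum C (Fo (A (n + 1))) (Go (A n))"
    and diffs: "snd ?cone n = cone_diff n (d n) (d (n + 1))"
      "snd ?cone_bar n = cone_diff n (bar (d n)) (bar (d (n + 1)))" for n
    using d by (simp_all add: cone_def fun_cplx_def bar_cplx_def nt_cplx_def cone_diff_def
        A_def d_def two_plus)
  define \<Phi> where "\<Phi> n = unitriangular (Fo (A (n + 1))) (Go (A n)) (twist n (d n))" for n
  define \<Psi> where "\<Psi> n = unitriangular (Fo (A (n + 1))) (Go (A n)) (negm C (twist n (d n)))" for n
  have twist_hom: "twist n (d n) \<in> hom C (Go (A n)) (Fo (A (n + 1)))" for n
    using d by (simp add: in_hom_iff)
  have \<Phi>_hom: "\<Phi> n \<in> hom C (fst ?cone n) (fst ?cone_bar n)"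
    and \<Psi>_hom: "\<Psi> n \<in> hom C (fst ?cone_bar n) (fst ?cone n)" for n
    using A twist_hom unfolding objects \<Phi>_def \<Psi>_def by (simp_all add: in_hom_iff)
  have inverse: "comp C (\<Psi> n) (\<Phi> n) = ident C (fst ?cone n)"
    "comp C (\<Phi> n) (\<Psi> n) = ident C (fst ?cone_bar n)" for n
    using unitriangular_inverse[OF F.obj_closed G.obj_closed twist_hom] A
    unfolding objects \<Phi>_def \<Psi>_def by simp_all
  have "chain_map C ?cone ?cone_bar \<Phi>"
    unfolding chain_map_def
  proof (intro allI conjI)
    fix n
    show "\<Phi> n \<in> hom C (fst ?cone n) (fst ?cone_bar n)" by (rule \<Phi>_hom)
    from cone_diff_twist[of "d n" "d (n + 1)" n] d dd
    show "comp C (snd ?cone_bar n) (\<Phi> n) = comp C (\<Phi> (n + 1)) (snd ?cone n)"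
      unfolding diffs \<Phi>_def by (simp add: two_plus)
  qed
  moreover have "chain_map C ?cone_bar ?cone \<Psi>"
  proof (rule chain_map_inverse[OF \<open>chain_map C ?cone ?cone_bar \<Phi>\<close> \<Psi>_hom inverse])
    show "snd ?cone n \<in> hom C (fst ?cone n) (fst ?cone (n + 1))"
      and "snd ?cone_bar n \<in> hom C (fst ?cone_bar n) (fst ?cone_bar (n + 1))" for n
      using d cone_diff_mor[of "d n" "d (n + 1)" n]
        cone_diff_mor[of "bar (d n)" "bar (d (n + 1))" n]
      unfolding objects diffs by (simp_all add: two_plus)
  qed
  ultimately show ?thesis
    unfolding cplx_iso_def using inverse by blast
qed

end

theorem lemma6p1:
  fixes C :: "('o, 'm) addcat"
    and Fo Go :: "'o \<Rightarrow> 'o" and Fm Gm bar bd :: "'m \<Rightarrow> 'm"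
    and f :: "'o \<Rightarrow> 'm" and X :: "('o, 'm) cplx"
  assumes "additive_category C"
    and "additive_functor C Fo Fm"
    and "additive_functor C Go Gm"
    and "involutive_bar C bar"
    and "nat_trans C Fo Fm Go Gm f"
    and "boundary_op C Fo Fm Go Gm bar f bd"
    and "chain_complex C X"
  shows "cplx_iso C
           (cone C (fun_cplx Fo Fm X) (fun_cplx Go Gm X) (nt_cplx f X))
           (cone C (fun_cplx Fo Fm (bar_cplx bar X)) (fun_cplx Go Gm (bar_cplx bar X))
                 (nt_cplx f (bar_cplx bar X)))"
proof -
  interpret cone_setting C Fo Go Fm Gm bar f bd
    using assms(1-6) unfolding involutive_bar_def by unfold_locales auto
  show ?thesis using cone_iso[OF assms(7)] .
qed

end
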